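(* Let $\mathcal{Q}_{\mathrm{pri}}$ be the set of isomorphism classes of prime quandles. There is a surjective ring homomorphism $$\mathbb{Z}[\mathcal{Q}_{\mathrm{pri}}]\longrightarrow\mathrm{B}(\mathcal{Q})$$ from the polynomial ring over $\mathbb{Z}$ with variables indexed by $\mathcal{Q}_{\mathrm{pri}}$ onto the Burnside ring of finite quandles, sending the variable $[P]$ to $b(P)$.
   Context: A rack is a set $R$ with a binary operation $\rhd$ such that every left multiplication $\ell_a\colon b\mapsto a\rhd b$ is a bijection and $a\rhd(b\rhd c)=(a\rhd b)\rhd(a\rhd c)$ for all $a,b,c$; a quandle is a rack with $a\rhd a=a$ for all $a$. Products are cartesian products with componentwise operation. The inner automorphism group $\mathrm{Inn}(R)$ is the subgroup of the symmetric group on $R$ generated by all $\ell_a$; a rack is connected if it is non-empty and $\mathrm{Inn}(R)$ acts transitively on $R$. A prime quandle is a finite connected quandle that is not a singleton and that is isomorphic to a product $A\times B$ of two quandles only when one of $A,B$ is a singleton. A subrack of $R$ is a subset $S$ with $\ell_s(S)=S$ for all $s\in S$; a decomposition of $R$ into $S$ and $T$ means $S,T$ are disjoint subracks (possibly empty) with $S\cup T=R$. The Burnside ring of finite quandles $\mathrm{B}(\mathcal{Q})$ is the abelian group generated by symbols $b(Q)$, one for each finite quandle $Q$, subject to $b(Q_1)=b(Q_2)$ whenever $Q_1\cong Q_2$ and $b(Q)=b(S)+b(T)$ whenever $Q$ decomposes into $S$ and $T$; it is a commutative ring with $b(Q)b(Q')=b(Q\times Q')$ and unit the class of the singleton. 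*)

theory Defs
  imports Main "HOL-Library.Poly_Mapping" "HOL-Library.Multiset" "HOL-Library.Nat_Bijection"
begin

text \<open>A (candidate) quandle structure: a carrier set of natural numbers together with a
binary operation; only its values on the carrier matter.  Every finite quandle is isomorphic
to one of this form, so these serve as the generators of the Burnside ring.\<close>
type_synonym qstr = "nat set \<times> (nat \<Rightarrow> nat \<Rightarrow> nat)"

definition is_quandle :: "nat set \<Rightarrow> (nat \<Rightarrow> nat \<Rightarrow> nat) \<Rightarrow> bool" where
  "is_quandle A op \<longleftrightarrow>
     (\<forall>a\<in>A. \<forall>b\<in>A. op a b \<in> A) \<and>
     (\<forall>a\<in>A. bij_betw (op a) A A) \<and>
     (\<forall>a\<in>A. \<forall>b\<in>A. \<forall>c\<in>A. op a (op b c) = op (op a b) (op a c)) \<and>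
     (\<forall>a\<in>A. op a a = a)"

definition fin_quandle :: "qstr \<Rightarrow> bool" where
  "fin_quandle Q \<longleftrightarrow> finite (fst Q) \<and> is_quandle (fst Q) (snd Q)"

inductive_set inn_group :: "nat set \<Rightarrow> (nat \<Rightarrow> nat \<Rightarrow> nat) \<Rightarrow> (nat \<Rightarrow> nat) set"
  for A op where
  inn_id: "id \<in> inn_group A op"
| inn_left: "g \<in> inn_group A op \<Longrightarrow> a \<in> A \<Longrightarrow> op a \<circ> g \<in> inn_group A op"
| inn_left_inv: "g \<in> inn_group A op \<Longrightarrow> a \<in> A \<Longrightarrow> inv_into A (op a) \<circ> g \<in> inn_group A op"

definition connected_rack :: "nat set \<Rightarrow> (nat \<Rightarrow> nat \<Rightarrow> nat) \<Rightarrow> bool" where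
  "connected_rack A op \<longleftrightarrow> A \<noteq> {} \<and> (\<forall>x\<in>A. \<forall>y\<in>A. \<exists>g\<in>inn_group A op. g x = y)"

definition qiso :: "qstr \<Rightarrow> qstr \<Rightarrow> bool" where
  "qiso Q Q' \<longleftrightarrow> (\<exists>f. bij_betw f (fst Q) (fst Q') \<and>
      (\<forall>a\<in>fst Q. \<forall>b\<in>fst Q. f (snd Q a b) = snd Q' (f a) (f b)))"

definition qprod :: "qstr \<Rightarrow> qstr \<Rightarrow> qstr" where
  "qprod Q Q' = (prod_encode ` (fst Q \<times> fst Q'),
     (\<lambda>x y. prod_encode (snd Q (fst (prod_decode x)) (fst (prod_decode y)),
                         snd Q' (snd (prod_decode x)) (snd (prod_decode y)))))"

definition qsingleton :: qstr where
  "qsingleton = ({0}, (\<lambda>_ _. 0))"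

definition prime_quandle :: "qstr \<Rightarrow> bool" where
  "prime_quandle Q \<longleftrightarrow> fin_quandle Q \<and> connected_rack (fst Q) (snd Q) \<and>
     \<not> is_singleton (fst Q) \<and>
     (\<forall>Q1 Q2. is_quandle (fst Q1) (snd Q1) \<and> is_quandle (fst Q2) (snd Q2) \<and>
              qiso Q (qprod Q1 Q2) \<longrightarrow> is_singleton (fst Q1) \<or> is_singleton (fst Q2))"

definition subrack :: "nat set \<Rightarrow> (nat \<Rightarrow> nat \<Rightarrow> nat) \<Rightarrow> nat set \<Rightarrow> bool" where
  "subrack A op S \<longleftrightarrow> S \<subseteq> A \<and> (\<forall>s\<in>S. op s ` S = S)"

text \<open>The subgroup of relations of the free abelian group on the generators;
  the Burnside ring B(Q) is (qstr =>0 int) modulo bnull.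
  Symbols of non-(finite quandle) structures are killed.\<close>
inductive_set bnull :: "(qstr \<Rightarrow>\<^sub>0 int) set" where
  bnull_zero: "0 \<in> bnull"
| bnull_iso: "fin_quandle Q \<Longrightarrow> fin_quandle Q' \<Longrightarrow> qiso Q Q' \<Longrightarrow>
     Poly_Mapping.single Q 1 - Poly_Mapping.single Q' 1 \<in> bnull"
| bnull_decomp: "fin_quandle (A, op) \<Longrightarrow> subrack A op S \<Longrightarrow> subrack A op T \<Longrightarrow>
     S \<inter> T = {} \<Longrightarrow> S \<union> T = A \<Longrightarrow>
     Poly_Mapping.single (A, op) 1 - Poly_Mapping.single (S, op) 1 - Poly_Mapping.single (T, op) 1 \<in> bnull"
| bnull_junk: "\<not> fin_quandle X \<Longrightarrow> Poly_Mapping.single X 1 \<in> bnull"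
| bnull_add: "x \<in> bnull \<Longrightarrow> y \<in> bnull \<Longrightarrow> x + y \<in> bnull"
| bnull_uminus: "x \<in> bnull \<Longrightarrow> - x \<in> bnull"

definition bmult :: "(qstr \<Rightarrow>\<^sub>0 int) \<Rightarrow> (qstr \<Rightarrow>\<^sub>0 int) \<Rightarrow> (qstr \<Rightarrow>\<^sub>0 int)" where
  "bmult x y = (\<Sum>Q\<in>Poly_Mapping.keys x. \<Sum>Q'\<in>Poly_Mapping.keys y.
      Poly_Mapping.single (qprod Q Q') (Poly_Mapping.lookup x Q * Poly_Mapping.lookup y Q'))"

definition bsym :: "qstr \<Rightarrow> (qstr \<Rightarrow>\<^sub>0 int)" where
  "bsym Q = Poly_Mapping.single Q 1"

definition qclass :: "qstr \<Rightarrow> qstr set" where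
  "qclass Q = {Q'. fin_quandle Q' \<and> qiso Q' Q}"

definition Qpri :: "qstr set set" where
  "Qpri = {qclass P | P. prime_quandle P}"

text \<open>Polynomial ring Z[Qpri]: integer polynomials ((variable multiset) =>0 int) whose
  variables all lie in Qpri.\<close>
definition Zpri :: "(qstr set multiset \<Rightarrow>\<^sub>0 int) set" where
  "Zpri = {p. \<forall>m\<in>Poly_Mapping.keys p. set_mset m \<subseteq> Qpri}"

definition pvar :: "qstr set \<Rightarrow> (qstr set multiset \<Rightarrow>\<^sub>0 int)" where
  "pvar v = Poly_Mapping.single {#v#} 1"

end

(*
  Fix a prime representative for every class in Qpri and send a monomial, a multiset of prime
  classes, to the product of the representatives of its variables; extend additively.  Products
  of quandle structures are associative, commutative and unital up to isomorphism, so this map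
  is multiplicative modulo the relations, once the product of representatives is known to
  respect the relations.  Surjectivity follows by strong induction on the size of a finite
  quandle Q: the empty quandle vanishes, a disconnected Q is the sum of an Inn-orbit and its
  complement (both subracks), a singleton is the unit, a prime Q is the image of its variable,
  and a connected Q that is not prime is a product of two strictly smaller quandles.
*)

theory Submission
  imports Defs
begin

section \<open>Isomorphisms and products of quandle structures\<close>

lemma qisoI:
  assumes "bij_betw h (fst Q) (fst Q')"
    and "\<And>a b. a \<in> fst Q \<Longrightarrow> b \<in> fst Q \<Longrightarrow> h (snd Q a b) = snd Q' (h a) (h b)"
  shows "qiso Q Q'"
  using assms unfolding qiso_def by blast

lemma qiso_refl: "qiso Q Q"
  by (rule qisoI[of id]) auto

lemma qiso_trans [trans]:
  assumes "qiso Q1 Q2" "qiso Q2 Q3"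
  shows "qiso Q1 Q3"
proof -
  obtain f where f: "bij_betw f (fst Q1) (fst Q2)"
    and hom_f: "\<And>a b. a \<in> fst Q1 \<Longrightarrow> b \<in> fst Q1 \<Longrightarrow> f (snd Q1 a b) = snd Q2 (f a) (f b)"
    using assms(1) unfolding qiso_def by blast
  obtain g where g: "bij_betw g (fst Q2) (fst Q3)"
    and hom_g: "\<And>a b. a \<in> fst Q2 \<Longrightarrow> b \<in> fst Q2 \<Longrightarrow> g (snd Q2 a b) = snd Q3 (g a) (g b)"
    using assms(2) unfolding qiso_def by blast
  show ?thesis
  proof (rule qisoI[of "g \<circ> f"])
    show "bij_betw (g \<circ> f) (fst Q1) (fst Q3)"
      using f g by (rule bij_betw_trans)
    show "(g \<circ> f) (snd Q1 a b) = snd Q3 ((g \<circ> f) a) ((g \<circ> f) b)"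
      if "a \<in> fst Q1" "b \<in> fst Q1" for a b
      using that hom_f hom_g bij_betw_apply[OF f] by simp
  qed
qed

lemma qprod_fst: "fst (qprod Q Q') = prod_encode ` (fst Q \<times> fst Q')"
  by (simp add: qprod_def)

lemma qprod_snd_prod_encode [simp]:
  "snd (qprod Q Q') (prod_encode (a, b)) (prod_encode (a', b')) =
    prod_encode (snd Q a a', snd Q' b b')"
  by (simp add: qprod_def)

lemma qprod_cong:
  assumes "qiso Q1 Q1'" "qiso Q2 Q2'"
  shows "qiso (qprod Q1 Q2) (qprod Q1' Q2')"
proof -
  obtain f where f: "bij_betw f (fst Q1) (fst Q1')"
    and hom_f: "\<forall>a\<in>fst Q1. \<forall>b\<in>fst Q1. f (snd Q1 a b) = snd Q1' (f a) (f b)"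
    using assms(1) unfolding qiso_def by blast
  obtain g where g: "bij_betw g (fst Q2) (fst Q2')"
    and hom_g: "\<forall>a\<in>fst Q2. \<forall>b\<in>fst Q2. g (snd Q2 a b) = snd Q2' (g a) (g b)"
    using assms(2) unfolding qiso_def by blast
  show ?thesis
  proof (rule qisoI[of "prod_encode \<circ> map_prod f g \<circ> prod_decode"])
    have "bij_betw prod_decode (fst (qprod Q1 Q2)) (fst Q1 \<times> fst Q2)"
      unfolding qprod_fst by (rule bij_betw_byWitness[of _ prod_encode]) auto
    moreover have "bij_betw prod_encode (fst Q1' \<times> fst Q2') (fst (qprod Q1' Q2'))"
      unfolding qprod_fst by (rule inj_on_imp_bij_betw[OF inj_prod_encode])
    ultimately show "bij_betw (prod_encode \<circ> map_prod f g \<circ> prod_decode)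
        (fst (qprod Q1 Q2)) (fst (qprod Q1' Q2'))"
      using bij_betw_map_prod[OF f g] by (blast intro: bij_betw_trans)
    show "(prod_encode \<circ> map_prod f g \<circ> prod_decode) (snd (qprod Q1 Q2) x y) =
        snd (qprod Q1' Q2') ((prod_encode \<circ> map_prod f g \<circ> prod_decode) x)
          ((prod_encode \<circ> map_prod f g \<circ> prod_decode) y)"
      if "x \<in> fst (qprod Q1 Q2)" "y \<in> fst (qprod Q1 Q2)" for x y
      using that hom_f hom_g by (auto simp: qprod_fst)
  qed
qed

(* qiso is symmetric only for structures closed under their operation, so the isomorphisms
   below are stated in the direction in which they are used. *)
lemma qprod_assoc: "qiso (qprod (qprod Q1 Q2) Q3) (qprod Q1 (qprod Q2 Q3))"
proof -
  define h where "h z = (case prod_decode z of (u, c) \<Rightarrow> case prod_decode u of (a, b) \<Rightarrow>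
      prod_encode (a, prod_encode (b, c)))" for z
  define h' where "h' z = (case prod_decode z of (a, v) \<Rightarrow> case prod_decode v of (b, c) \<Rightarrow>
      prod_encode (prod_encode (a, b), c))" for z
  show ?thesis
  proof (rule qisoI[of h])
    show "bij_betw h (fst (qprod (qprod Q1 Q2) Q3)) (fst (qprod Q1 (qprod Q2 Q3)))"
      by (rule bij_betw_byWitness[of _ h']) (auto simp: qprod_fst h_def h'_def)
  qed (auto simp: qprod_fst h_def)
qed

lemma qprod_comm: "qiso (qprod Q1 Q2) (qprod Q2 Q1)"
proof -
  define h where "h z = prod_encode (prod.swap (prod_decode z))" for z
  show ?thesis
  proof (rule qisoI[of h])
    show "bij_betw h (fst (qprod Q1 Q2)) (fst (qprod Q2 Q1))"
      by (rule bij_betw_byWitness[of _ h]) (auto simp: qprod_fst h_def)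
  qed (auto simp: qprod_fst h_def)
qed

lemma qprod_left_commute: "qiso (qprod Q1 (qprod Q2 Q3)) (qprod Q2 (qprod Q1 Q3))"
proof -
  define h where "h z = (case prod_decode z of (a, v) \<Rightarrow> case prod_decode v of (b, c) \<Rightarrow>
      prod_encode (b, prod_encode (a, c)))" for z
  show ?thesis
  proof (rule qisoI[of h])
    show "bij_betw h (fst (qprod Q1 (qprod Q2 Q3))) (fst (qprod Q2 (qprod Q1 Q3)))"
      by (rule bij_betw_byWitness[of _ h]) (auto simp: qprod_fst h_def)
  qed (auto simp: qprod_fst h_def)
qed

lemma qprod_qsingleton_left: "qiso (qprod qsingleton Q) Q"
proof (rule qisoI[of "\<lambda>z. snd (prod_decode z)"])
  show "bij_betw (\<lambda>z. snd (prod_decode z)) (fst (qprod qsingleton Q)) (fst Q)"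
    by (rule bij_betw_byWitness[of _ "\<lambda>z. prod_encode (0, z)"]) (auto simp: qprod_fst qsingleton_def)
qed (auto simp: qprod_fst qsingleton_def)

lemma qprod_qsingleton_right: "qiso (qprod Q qsingleton) Q"
  using qprod_comm qprod_qsingleton_left by (rule qiso_trans)

lemma bij_betw_map_prod_iff:
  assumes "A \<noteq> {}" "B \<noteq> {}"
  shows "bij_betw (map_prod f g) (A \<times> B) (A \<times> B) \<longleftrightarrow> bij_betw f A A \<and> bij_betw g B B"
proof
  assume bij: "bij_betw (map_prod f g) (A \<times> B) (A \<times> B)"
  obtain a b where "a \<in> A" "b \<in> B" using assms by blast
  then have "inj_on f A" "inj_on g B"
    using bij unfolding bij_betw_def inj_on_def by fastforce+
  moreover from \<open>a \<in> A\<close> \<open>b \<in> B\<close> have "f ` A = A" "g ` B = B"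
    using bij unfolding bij_betw_def by (auto simp: map_prod_surj_on)
  ultimately show "bij_betw f A A \<and> bij_betw g B B" by (simp add: bij_betw_def)
qed (simp add: bij_betw_map_prod)

lemma is_quandle_qprod_iff:
  assumes "fst Q \<noteq> {}" "fst Q' \<noteq> {}"
  shows "is_quandle (fst (qprod Q Q')) (snd (qprod Q Q')) \<longleftrightarrow>
    is_quandle (fst Q) (snd Q) \<and> is_quandle (fst Q') (snd Q')"
proof -
  obtain A op B op' where Q: "Q = (A, op)" "Q' = (B, op')" by fastforce
  have ne: "A \<noteq> {}" "B \<noteq> {}" using assms Q by auto
  then obtain a0 b0 where ab0: "a0 \<in> A" "b0 \<in> B" by blast
  let ?P = "prod_encode ` (A \<times> B)" and ?op = "snd (qprod Q Q')"
  have lmult: "bij_betw (?op (prod_encode (a, b))) ?P ?P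
      \<longleftrightarrow> bij_betw (map_prod (op a) (op' b)) (A \<times> B) (A \<times> B)" for a b
  proof -
    have "inj_on (?op (prod_encode (a, b))) ?P \<longleftrightarrow> inj_on (map_prod (op a) (op' b)) (A \<times> B)"
      unfolding inj_on_def by (auto simp: Q)
    moreover have "?op (prod_encode (a, b)) ` ?P = prod_encode ` map_prod (op a) (op' b) ` (A \<times> B)"
      by (force simp: Q)
    ultimately show ?thesis
      unfolding bij_betw_def by (simp add: inj_image_eq_iff[OF inj_prod_encode])
  qed
  have closed: "(\<forall>x\<in>?P. \<forall>y\<in>?P. ?op x y \<in> ?P) \<longleftrightarrow>
      (\<forall>a\<in>A. \<forall>a'\<in>A. op a a' \<in> A) \<and> (\<forall>b\<in>B. \<forall>b'\<in>B. op' b b' \<in> B)"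
    using ab0 by (auto simp: Q inj_image_mem_iff[OF inj_prod_encode])
  have bij: "(\<forall>x\<in>?P. bij_betw (?op x) ?P ?P) \<longleftrightarrow>
      (\<forall>a\<in>A. bij_betw (op a) A A) \<and> (\<forall>b\<in>B. bij_betw (op' b) B B)"
    using ab0 by (auto simp: lmult bij_betw_map_prod_iff[OF ne])
  have distrib: "(\<forall>x\<in>?P. \<forall>y\<in>?P. \<forall>z\<in>?P. ?op x (?op y z) = ?op (?op x y) (?op x z)) \<longleftrightarrow>
      (\<forall>a\<in>A. \<forall>a'\<in>A. \<forall>a''\<in>A. op a (op a' a'') = op (op a a') (op a a'')) \<and>
      (\<forall>b\<in>B. \<forall>b'\<in>B. \<forall>b''\<in>B. op' b (op' b' b'') = op' (op' b b') (op' b b''))"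
    using ab0 by (auto simp: Q)
  have idem: "(\<forall>x\<in>?P. ?op x x = x) \<longleftrightarrow> (\<forall>a\<in>A. op a a = a) \<and> (\<forall>b\<in>B. op' b b = b)"
    using ab0 by (auto simp: Q)
  show ?thesis
    using closed bij distrib idem unfolding is_quandle_def qprod_fst Q fst_conv snd_conv by argo
qed

lemma is_quandle_lmult_bij: "is_quandle A op \<Longrightarrow> a \<in> A \<Longrightarrow> bij_betw (op a) A A"
  unfolding is_quandle_def by blast

lemma fin_quandle_empty: "fst Q = {} \<Longrightarrow> fin_quandle Q"
  by (simp add: fin_quandle_def is_quandle_def)

lemma fin_quandle_qprod_iff:
  assumes "fst Q \<noteq> {}" "fst Q' \<noteq> {}"
  shows "fin_quandle (qprod Q Q') \<longleftrightarrow> fin_quandle Q \<and> fin_quandle Q'"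
proof -
  have "finite (fst (qprod Q Q')) \<longleftrightarrow> finite (fst Q \<times> fst Q')"
    unfolding qprod_fst by (rule finite_image_iff[OF inj_on_subset[OF inj_prod_encode subset_UNIV]])
  also have "\<dots> \<longleftrightarrow> finite (fst Q) \<and> finite (fst Q')"
    using assms by (simp add: finite_cartesian_product_iff)
  finally show ?thesis
    unfolding fin_quandle_def using is_quandle_qprod_iff[OF assms] by blast
qed

lemma fin_quandle_qprod: "fin_quandle Q \<Longrightarrow> fin_quandle Q' \<Longrightarrow> fin_quandle (qprod Q Q')"
  using fin_quandle_qprod_iff fin_quandle_empty[of "qprod Q Q'"] by (cases "fst Q = {} \<or> fst Q' = {}")
    (auto simp: qprod_fst)

lemma fin_quandle_qsingleton: "fin_quandle qsingleton"
  by (auto simp: fin_quandle_def qsingleton_def is_quandle_def bij_betw_def)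

section \<open>Relations of the Burnside ring\<close>

definition bcong :: "(qstr \<Rightarrow>\<^sub>0 int) \<Rightarrow> (qstr \<Rightarrow>\<^sub>0 int) \<Rightarrow> bool" (infix "\<sim>\<^sub>B" 50) where
  "x \<sim>\<^sub>B y \<longleftrightarrow> x - y \<in> bnull"

lemma bnull_diff: "x \<in> bnull \<Longrightarrow> y \<in> bnull \<Longrightarrow> x - y \<in> bnull"
  by (metis bnull_add bnull_uminus diff_conv_add_uminus)

lemma bnull_frag_cmul: "x \<in> bnull \<Longrightarrow> frag_cmul k x \<in> bnull"
  by (rule frag_closure_minus_cmul[where P = "\<lambda>x. x \<in> bnull"]) (auto intro: bnull_zero bnull_diff)

lemma bnull_sum: "(\<And>i. i \<in> I \<Longrightarrow> f i \<in> bnull) \<Longrightarrow> sum f I \<in> bnull"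
  by (induction I rule: infinite_finite_induct) (auto intro: bnull_zero bnull_add)

lemma bnull_frag_extend:
  "(\<And>i. i \<in> Poly_Mapping.keys c \<Longrightarrow> h i \<in> bnull) \<Longrightarrow> frag_extend h c \<in> bnull"
  unfolding frag_extend_def by (intro bnull_sum bnull_frag_cmul)

lemma bcong_refl [simp]: "x \<sim>\<^sub>B x"
  by (simp add: bcong_def bnull_zero)

lemma bcong_sym: "x \<sim>\<^sub>B y \<Longrightarrow> y \<sim>\<^sub>B x"
  unfolding bcong_def using bnull_uminus by fastforce

lemma bcong_trans [trans]: "x \<sim>\<^sub>B y \<Longrightarrow> y \<sim>\<^sub>B z \<Longrightarrow> x \<sim>\<^sub>B z"
  unfolding bcong_def using bnull_add by fastforce

lemma bcong_diff: "x \<sim>\<^sub>B x' \<Longrightarrow> y \<sim>\<^sub>B y' \<Longrightarrow> x - y \<sim>\<^sub>B x' - y'"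
  unfolding bcong_def using bnull_diff[of "x - x'" "y - y'"] by (simp add: algebra_simps)

lemma bcong_0_iff: "x \<sim>\<^sub>B 0 \<longleftrightarrow> x \<in> bnull"
  by (simp add: bcong_def)

lemma bcong_qiso:
  "fin_quandle Q \<Longrightarrow> fin_quandle Q' \<Longrightarrow> qiso Q Q' \<Longrightarrow> frag_of Q \<sim>\<^sub>B frag_of Q'"
  unfolding bcong_def by (rule bnull_iso)

lemma bcong_decomp:
  assumes "fin_quandle (A, op)" "subrack A op S" "subrack A op T" "S \<inter> T = {}" "S \<union> T = A"
  shows "frag_of (A, op) \<sim>\<^sub>B frag_of (S, op) + frag_of (T, op)"
  using bnull_decomp[OF assms] by (simp add: bcong_def diff_diff_eq)

(* The empty quandle decomposes into two copies of itself. *)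
lemma frag_of_empty_bnull:
  assumes "fst Q = {}"
  shows "frag_of Q \<in> bnull"
proof -
  obtain op where Q: "Q = ({}, op)" using assms by (cases Q) auto
  have "frag_of Q \<sim>\<^sub>B frag_of Q + frag_of Q"
    unfolding Q by (rule bcong_decomp) (auto simp: subrack_def fin_quandle_empty)
  then show ?thesis
    unfolding bcong_def using bnull_uminus by fastforce
qed

(* bmult acts on all representatives, including the symbols of non-quandles killed by bnull. *)
lemma frag_of_qprod_bnull:
  assumes "\<not> fin_quandle X \<or> \<not> fin_quandle Y"
  shows "frag_of (qprod X Y) \<in> bnull"
proof (cases "fst X = {} \<or> fst Y = {}")
  case True
  then show ?thesis by (intro frag_of_empty_bnull) (auto simp: qprod_fst)
next
  case False
  then show ?thesis using assms fin_quandle_qprod_iff by (blast intro: bnull_junk)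
qed

section \<open>The product on representatives respects the relations\<close>

lemma frag_extend_diff_fun:
  "frag_extend (\<lambda>i. f i - g i) c = frag_extend f c - frag_extend g c"
proof -
  have "frag_cmul k (a - b) = frag_cmul k a - frag_cmul k b" for k and a b :: "'a \<Rightarrow>\<^sub>0 int"
    by (rule poly_mapping_eqI) (simp add: lookup_minus right_diff_distrib)
  then show ?thesis unfolding frag_extend_def by (simp add: sum_subtractf)
qed

lemma frag_extend_swap:
  "frag_extend (\<lambda>a. frag_extend (F a) y) x = frag_extend (\<lambda>b. frag_extend (\<lambda>a. F a b) x) y"
  using subset_UNIV
proof (induction x rule: frag_induction)
  case zero
  then show ?case by (simp add: frag_extend_eq_0)
next
  case (diff a b)
  then show ?case by (simp add: frag_extend_diff frag_extend_diff_fun)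
qed simp

lemma bmult_frag_extend:
  "bmult x y = frag_extend (\<lambda>Q. frag_extend (\<lambda>Q'. frag_of (qprod Q Q')) y) x"
proof -
  have "frag_cmul k (Poly_Mapping.single Q l) = Poly_Mapping.single Q (k * l)" for k l and Q :: qstr
    by (rule poly_mapping_eqI) (simp add: lookup_single when_def)
  then show ?thesis
    unfolding bmult_def frag_extend_def by (simp add: frag_cmul_sum mult.commute)
qed

lemma bmult_frag_of [simp]: "bmult (frag_of Q) (frag_of Q') = frag_of (qprod Q Q')"
  by (simp add: bmult_frag_extend)

lemma bmult_diff_left: "bmult (x - x') y = bmult x y - bmult x' y"
  by (simp add: bmult_frag_extend frag_extend_diff)

lemma bmult_diff_right: "bmult x (y - y') = bmult x y - bmult x y'"
  by (simp add: bmult_frag_extend frag_extend_diff frag_extend_diff_fun)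

lemma bcong_qprod_qiso_left:
  assumes "fin_quandle Q" "fin_quandle Q'" "qiso Q Q'"
  shows "frag_of (qprod Q Y) \<sim>\<^sub>B frag_of (qprod Q' Y)"
proof (cases "fin_quandle Y")
  case True
  then show ?thesis
    using assms by (intro bcong_qiso fin_quandle_qprod qprod_cong qiso_refl)
next
  case False
  then show ?thesis by (simp add: bcong_def bnull_diff frag_of_qprod_bnull)
qed

lemma bcong_qprod_comm: "frag_of (qprod Q Q') \<sim>\<^sub>B frag_of (qprod Q' Q)"
proof (cases "fin_quandle Q \<and> fin_quandle Q'")
  case True
  then show ?thesis by (intro bcong_qiso fin_quandle_qprod qprod_comm) auto
next
  case False
  then show ?thesis by (auto simp: bcong_def bnull_diff frag_of_qprod_bnull)
qed

lemma bcong_qprod_decomp: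
  assumes fin: "fin_quandle (A, op)" and S: "subrack A op S" and T: "subrack A op T"
    and ST: "S \<inter> T = {}" "S \<union> T = A"
  shows "frag_of (qprod (A, op) Y) \<sim>\<^sub>B frag_of (qprod (S, op) Y) + frag_of (qprod (T, op) Y)"
proof (cases "fin_quandle Y")
  case False
  then show ?thesis
    by (simp add: bcong_def frag_of_qprod_bnull bnull_diff flip: diff_diff_eq)
next
  case True
  obtain B op' where Y: "Y = (B, op')" by (cases Y)
  have lmult_B: "op' b ` B = B" if "b \<in> B" for b
    using True that is_quandle_lmult_bij[of B op' b] by (simp add: Y fin_quandle_def bij_betw_def)
  define opP where "opP = snd (qprod (A, op) Y)"
  have qprod_eq: "qprod (Z, op) Y = (prod_encode ` (Z \<times> B), opP)" for Z
    by (simp add: qprod_def Y opP_def)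
  have "subrack (prod_encode ` (A \<times> B)) opP (prod_encode ` (Z \<times> B))" if Z: "subrack A op Z" for Z
    unfolding subrack_def
  proof (intro conjI ballI)
    show "prod_encode ` (Z \<times> B) \<subseteq> prod_encode ` (A \<times> B)" using Z by (auto simp: subrack_def)
    fix s assume "s \<in> prod_encode ` (Z \<times> B)"
    then obtain a b where s: "s = prod_encode (a, b)" "a \<in> Z" "b \<in> B" by blast
    have "opP s ` prod_encode ` (Z \<times> B) = prod_encode ` map_prod (op a) (op' b) ` (Z \<times> B)"
      by (force simp: s opP_def Y)
    also have "map_prod (op a) (op' b) ` (Z \<times> B) = Z \<times> B"
      using Z s lmult_B by (intro map_prod_surj_on) (auto simp: subrack_def)
    finally show "opP s ` prod_encode ` (Z \<times> B) = prod_encode ` (Z \<times> B)" .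
  qed
  moreover have "fin_quandle (prod_encode ` (A \<times> B), opP)"
    using fin_quandle_qprod[OF fin True] by (simp add: qprod_eq)
  ultimately show ?thesis
    unfolding qprod_eq using S T ST by (intro bcong_decomp) auto
qed

lemma bmult_bnull_left: "n \<in> bnull \<Longrightarrow> bmult n y \<in> bnull"
proof (induction n rule: bnull.induct)
  case (bnull_iso Q Q')
  have "bmult (frag_of Q - frag_of Q') y =
      frag_extend (\<lambda>Z. frag_of (qprod Q Z) - frag_of (qprod Q' Z)) y"
    by (simp add: bmult_frag_extend frag_extend_diff frag_extend_diff_fun)
  also have "\<dots> \<in> bnull"
    using bcong_qprod_qiso_left[OF bnull_iso.hyps] by (auto simp: bcong_def intro!: bnull_frag_extend)
  finally show ?case .
next
  case (bnull_decomp A op S T)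
  have "bmult (frag_of (A, op) - frag_of (S, op) - frag_of (T, op)) y = frag_extend
      (\<lambda>Z. frag_of (qprod (A, op) Z) - frag_of (qprod (S, op) Z) - frag_of (qprod (T, op) Z)) y"
    by (simp add: bmult_frag_extend frag_extend_diff frag_extend_diff_fun)
  also have "\<dots> \<in> bnull"
    using bcong_qprod_decomp[OF bnull_decomp.hyps]
    by (auto simp: bcong_def diff_diff_eq intro!: bnull_frag_extend)
  finally show ?case .
next
  case (bnull_junk X)
  then show ?case
    by (auto simp: bmult_frag_extend frag_of_qprod_bnull intro: bnull_frag_extend)
qed (auto simp: bmult_frag_extend frag_extend_add frag_extend_minus intro: bnull.intros)

lemma bmult_comm: "bmult x y \<sim>\<^sub>B bmult y x"
proof -
  have "bmult y x = frag_extend (\<lambda>Q. frag_extend (\<lambda>Q'. frag_of (qprod Q' Q)) y) x"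
    unfolding bmult_frag_extend by (rule frag_extend_swap)
  then have "bmult x y - bmult y x =
      frag_extend (\<lambda>Q. frag_extend (\<lambda>Q'. frag_of (qprod Q Q') - frag_of (qprod Q' Q)) y) x"
    by (simp add: bmult_frag_extend frag_extend_diff_fun)
  also have "\<dots> \<in> bnull"
    using bcong_qprod_comm by (auto simp: bcong_def intro!: bnull_frag_extend)
  finally show ?thesis unfolding bcong_def .
qed

lemma bmult_bnull_right:
  assumes "n \<in> bnull"
  shows "bmult y n \<in> bnull"
proof -
  have "bmult y n \<sim>\<^sub>B bmult n y" by (rule bmult_comm)
  also have "bmult n y \<sim>\<^sub>B 0" using assms by (simp add: bcong_0_iff bmult_bnull_left)
  finally show ?thesis by (simp add: bcong_0_iff)
qed

lemma bmult_bcong: "x \<sim>\<^sub>B x' \<Longrightarrow> y \<sim>\<^sub>B y' \<Longrightarrow> bmult x y \<sim>\<^sub>B bmult x' y'"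
proof -
  assume "x \<sim>\<^sub>B x'" "y \<sim>\<^sub>B y'"
  then have "bmult (x - x') y + bmult x' (y - y') \<in> bnull"
    by (intro bnull_add bmult_bnull_left bmult_bnull_right) (simp_all add: bcong_def)
  then show ?thesis by (simp add: bcong_def bmult_diff_left bmult_diff_right)
qed

section \<open>Orbit decomposition\<close>

definition inn_orbit :: "nat set \<Rightarrow> (nat \<Rightarrow> nat \<Rightarrow> nat) \<Rightarrow> nat \<Rightarrow> nat set" where
  "inn_orbit A op x = {g x | g. g \<in> inn_group A op}"

lemma inn_group_bij:
  assumes "g \<in> inn_group A op" "is_quandle A op"
  shows "bij_betw g A A"
  using assms
proof (induction rule: inn_group.induct)
  case inn_id
  show ?case by (simp add: bij_betw_def)
next
  case (inn_left g a)
  then have "bij_betw g A A" "bij_betw (op a) A A" by (auto intro: is_quandle_lmult_bij)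
  then show ?case by (rule bij_betw_trans)
next
  case (inn_left_inv g a)
  then have "bij_betw g A A" "bij_betw (inv_into A (op a)) A A"
    by (auto intro: is_quandle_lmult_bij bij_betw_inv_into)
  then show ?case by (rule bij_betw_trans)
qed

lemma mem_inn_orbit_self: "x \<in> inn_orbit A op x"
  unfolding inn_orbit_def by (rule CollectI, rule exI[of _ id]) (simp add: inn_group.inn_id)

lemma inn_orbit_subset: "is_quandle A op \<Longrightarrow> x \<in> A \<Longrightarrow> inn_orbit A op x \<subseteq> A"
  unfolding inn_orbit_def using inn_group_bij bij_betw_apply by fastforce

lemma lmult_inn_orbit:
  assumes q: "is_quandle A op" and "x \<in> A" "s \<in> A"
  shows "op s ` inn_orbit A op x = inn_orbit A op x"
proof
  show "op s ` inn_orbit A op x \<subseteq> inn_orbit A op x"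
  proof
    fix z assume "z \<in> op s ` inn_orbit A op x"
    then obtain g where "g \<in> inn_group A op" "z = (op s \<circ> g) x" unfolding inn_orbit_def by auto
    then show "z \<in> inn_orbit A op x"
      unfolding inn_orbit_def using \<open>s \<in> A\<close> by (blast intro: inn_group.inn_left)
  qed
  show "inn_orbit A op x \<subseteq> op s ` inn_orbit A op x"
  proof
    fix z assume z: "z \<in> inn_orbit A op x"
    then obtain g where g: "g \<in> inn_group A op" "z = g x" unfolding inn_orbit_def by blast
    have "bij_betw (op s) A A" using q \<open>s \<in> A\<close> by (rule is_quandle_lmult_bij)
    moreover have "z \<in> A" using z inn_orbit_subset[OF q \<open>x \<in> A\<close>] by blast
    ultimately have "z = op s (inv_into A (op s) z)" by (simp add: bij_betw_inv_into_right)
    moreover have "inv_into A (op s) z = (inv_into A (op s) \<circ> g) x" using g by simp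
    then have "inv_into A (op s) z \<in> inn_orbit A op x"
      unfolding inn_orbit_def using g \<open>s \<in> A\<close> by (blast intro: inn_group.inn_left_inv)
    ultimately show "z \<in> op s ` inn_orbit A op x" by blast
  qed
qed

lemma subrack_Diff_invariant:
  assumes "is_quandle A op" "S \<subseteq> A" "\<And>s. s \<in> A \<Longrightarrow> op s ` S = S"
  shows "subrack A op (A - S)"
  unfolding subrack_def
proof (intro conjI ballI)
  fix s assume s: "s \<in> A - S"
  then have "bij_betw (op s) A A" using assms(1) is_quandle_lmult_bij by blast
  then show "op s ` (A - S) = A - S"
    using assms s inj_on_image_set_diff[of "op s" A A S] by (auto simp: bij_betw_def)
qed blast

lemma fin_quandle_subrack:
  assumes "fin_quandle (A, op)" "subrack A op S"
  shows "fin_quandle (S, op)"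
proof -
  have A: "finite A" "is_quandle A op" using assms(1) by (auto simp: fin_quandle_def)
  have "S \<subseteq> A" and lmult: "\<And>s. s \<in> S \<Longrightarrow> op s ` S = S"
    using assms(2) by (auto simp: subrack_def)
  have "finite S" using \<open>S \<subseteq> A\<close> A(1) by (rule finite_subset)
  moreover have "\<forall>a\<in>S. \<forall>b\<in>S. op a b \<in> S" using lmult by blast
  moreover have "\<forall>a\<in>S. bij_betw (op a) S S"
  proof
    fix a assume "a \<in> S"
    then have "inj_on (op a) A" using is_quandle_lmult_bij[OF A(2)] \<open>S \<subseteq> A\<close> by (auto simp: bij_betw_def)
    then show "bij_betw (op a) S S"
      using lmult[OF \<open>a \<in> S\<close>] \<open>S \<subseteq> A\<close> by (simp add: bij_betw_def inj_on_subset)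
  qed
  moreover have "\<forall>a\<in>S. \<forall>b\<in>S. \<forall>c\<in>S. op a (op b c) = op (op a b) (op a c)" "\<forall>a\<in>S. op a a = a"
    using A(2) \<open>S \<subseteq> A\<close> unfolding is_quandle_def by blast+
  ultimately show ?thesis unfolding fin_quandle_def is_quandle_def fst_conv snd_conv by blast
qed

lemma disconnected_decomp:
  assumes q: "is_quandle A op" and "A \<noteq> {}" "\<not> connected_rack A op"
  obtains S where "subrack A op S" "subrack A op (A - S)" "S \<noteq> {}" "S \<subset> A"
proof -
  obtain x y where xy: "x \<in> A" "y \<in> A" "\<forall>g\<in>inn_group A op. g x \<noteq> y"
    using assms unfolding connected_rack_def by blast
  let ?S = "inn_orbit A op x"
  have invariant: "op s ` ?S = ?S" if "s \<in> A" for s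
    using lmult_inn_orbit[OF q \<open>x \<in> A\<close> that] .
  have "subrack A op ?S"
    unfolding subrack_def using invariant inn_orbit_subset[OF q \<open>x \<in> A\<close>] by blast
  moreover have "subrack A op (A - ?S)"
    using invariant inn_orbit_subset[OF q \<open>x \<in> A\<close>] by (intro subrack_Diff_invariant q)
  moreover have "?S \<noteq> {}" using mem_inn_orbit_self by blast
  moreover have "y \<notin> ?S" using xy(3) by (auto simp: inn_orbit_def)
  then have "?S \<subset> A" using inn_orbit_subset[OF q \<open>x \<in> A\<close>] xy(2) by blast
  ultimately show ?thesis by (rule that)
qed

section \<open>The evaluation map\<close>

definition prime_rep :: "qstr set \<Rightarrow> qstr" where
  "prime_rep c = (SOME P. prime_quandle P \<and> qclass P = c)"

definition qprod_list :: "qstr set list \<Rightarrow> qstr" where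
  "qprod_list cs = foldr (\<lambda>c Q. qprod (prime_rep c) Q) cs qsingleton"

(* Any enumeration of m will do: they all give isomorphic products by qprod_list_perm. *)
definition monomial_quandle :: "qstr set multiset \<Rightarrow> qstr" where
  "monomial_quandle m = qprod_list (SOME cs. mset cs = m)"

definition burnside_eval :: "(qstr set multiset \<Rightarrow>\<^sub>0 int) \<Rightarrow> (qstr \<Rightarrow>\<^sub>0 int)" where
  "burnside_eval p = frag_extend (\<lambda>m. frag_of (monomial_quandle m)) p"

lemma qclass_in_Qpri: "prime_quandle P \<Longrightarrow> qclass P \<in> Qpri"
  unfolding Qpri_def by blast

lemma prime_rep_spec: "c \<in> Qpri \<Longrightarrow> prime_quandle (prime_rep c) \<and> qclass (prime_rep c) = c"
  unfolding prime_rep_def Qpri_def by (rule someI_ex) blast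

lemma fin_quandle_prime_rep: "c \<in> Qpri \<Longrightarrow> fin_quandle (prime_rep c)"
  using prime_rep_spec by (auto simp: prime_quandle_def)

lemma qiso_prime_rep:
  assumes "prime_quandle P"
  shows "qiso (prime_rep (qclass P)) P"
proof -
  have "prime_rep (qclass P) \<in> qclass (prime_rep (qclass P))"
    using fin_quandle_prime_rep qclass_in_Qpri assms by (simp add: qclass_def qiso_refl)
  then have "prime_rep (qclass P) \<in> qclass P"
    using prime_rep_spec qclass_in_Qpri assms by metis
  then show ?thesis by (simp add: qclass_def)
qed

lemma qprod_list_Nil [simp]: "qprod_list [] = qsingleton"
  and qprod_list_Cons [simp]: "qprod_list (c # cs) = qprod (prime_rep c) (qprod_list cs)"
  by (simp_all add: qprod_list_def)

lemma fin_quandle_qprod_list: "set cs \<subseteq> Qpri \<Longrightarrow> fin_quandle (qprod_list cs)"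
  by (induction cs) (auto simp: fin_quandle_qsingleton fin_quandle_qprod fin_quandle_prime_rep)

lemma qprod_list_append: "qiso (qprod (qprod_list cs) (qprod_list ds)) (qprod_list (cs @ ds))"
proof (induction cs)
  case Nil
  show ?case by (simp add: qprod_qsingleton_left)
next
  case (Cons c cs)
  have "qiso (qprod (qprod (prime_rep c) (qprod_list cs)) (qprod_list ds))
      (qprod (prime_rep c) (qprod (qprod_list cs) (qprod_list ds)))"
    by (rule qprod_assoc)
  also have "qiso \<dots> (qprod (prime_rep c) (qprod_list (cs @ ds)))"
    using Cons.IH by (rule qprod_cong[OF qiso_refl])
  finally show ?case by simp
qed

lemma qprod_list_move: "qiso (qprod_list (c # cs @ ds)) (qprod_list (cs @ c # ds))"
proof (induction cs)
  case Nil
  show ?case by (simp add: qiso_refl)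
next
  case (Cons c' cs)
  have "qiso (qprod (prime_rep c) (qprod (prime_rep c') (qprod_list (cs @ ds))))
      (qprod (prime_rep c') (qprod (prime_rep c) (qprod_list (cs @ ds))))"
    by (rule qprod_left_commute)
  also have "qiso \<dots> (qprod (prime_rep c') (qprod_list (cs @ c # ds)))"
    using Cons.IH by (simp add: qprod_cong qiso_refl)
  finally show ?case by simp
qed

lemma qprod_list_perm: "mset cs = mset ds \<Longrightarrow> qiso (qprod_list cs) (qprod_list ds)"
proof (induction cs arbitrary: ds)
  case Nil
  then show ?case by (simp add: qiso_refl)
next
  case (Cons c cs)
  then have "c \<in> set ds" by (metis list.set_intros(1) set_mset_mset)
  then obtain ds1 ds2 where ds: "ds = ds1 @ c # ds2" by (meson split_list)
  then have "qiso (qprod_list (c # cs)) (qprod_list (c # ds1 @ ds2))"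
    using Cons by (simp add: qprod_cong qiso_refl)
  also have "qiso \<dots> (qprod_list ds)"
    unfolding ds by (rule qprod_list_move)
  finally show ?case .
qed

lemma monomial_quandle_qprod_list: "\<exists>cs. mset cs = m \<and> monomial_quandle m = qprod_list cs"
  unfolding monomial_quandle_def by (metis (mono_tags) ex_mset someI_ex)

lemma monomial_quandle_empty: "monomial_quandle {#} = qsingleton"
  using monomial_quandle_qprod_list[of "{#}"] by auto

lemma monomial_quandle_single: "monomial_quandle {#c#} = qprod (prime_rep c) qsingleton"
  using monomial_quandle_qprod_list[of "{#c#}"] by auto

lemma fin_quandle_monomial_quandle: "set_mset m \<subseteq> Qpri \<Longrightarrow> fin_quandle (monomial_quandle m)"
  using monomial_quandle_qprod_list fin_quandle_qprod_list by (metis set_mset_mset)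

lemma qiso_monomial_quandle_add:
  "qiso (qprod (monomial_quandle m) (monomial_quandle m')) (monomial_quandle (m + m'))"
proof -
  obtain cs where cs: "mset cs = m" "monomial_quandle m = qprod_list cs"
    using monomial_quandle_qprod_list by blast
  obtain ds where ds: "mset ds = m'" "monomial_quandle m' = qprod_list ds"
    using monomial_quandle_qprod_list by blast
  obtain es where es: "mset es = m + m'" "monomial_quandle (m + m') = qprod_list es"
    using monomial_quandle_qprod_list by blast
  have "qiso (qprod_list (cs @ ds)) (qprod_list es)"
    using cs ds es by (simp add: qprod_list_perm)
  with qprod_list_append show ?thesis unfolding cs ds es by (rule qiso_trans)
qed

lemma burnside_eval_add: "burnside_eval (p + q) = burnside_eval p + burnside_eval q"
  by (simp add: burnside_eval_def frag_extend_add)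

lemma burnside_eval_diff: "burnside_eval (p - q) = burnside_eval p - burnside_eval q"
  by (simp add: burnside_eval_def frag_extend_diff)

lemma burnside_eval_frag_of [simp]: "burnside_eval (frag_of m) = frag_of (monomial_quandle m)"
  by (simp add: burnside_eval_def)

lemma burnside_eval_one: "burnside_eval 1 = frag_of qsingleton"
  using burnside_eval_frag_of[of "{#}"] by (simp add: monomial_quandle_empty)

lemma Zpri_iff_keys: "p \<in> Zpri \<longleftrightarrow> Poly_Mapping.keys p \<subseteq> {m. set_mset m \<subseteq> Qpri}"
  unfolding Zpri_def by blast

lemma Zpri_zero: "0 \<in> Zpri"
  and Zpri_one: "1 \<in> Zpri"
  by (simp_all add: Zpri_def)

lemma Zpri_diff: "p \<in> Zpri \<Longrightarrow> q \<in> Zpri \<Longrightarrow> p - q \<in> Zpri"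
  unfolding Zpri_iff_keys by (rule subset_trans[OF keys_diff Un_least])

lemma Zpri_mult: "p \<in> Zpri \<Longrightarrow> q \<in> Zpri \<Longrightarrow> p * q \<in> Zpri"
  unfolding Zpri_iff_keys using keys_mult by fastforce

lemma Zpri_pvar: "c \<in> Qpri \<Longrightarrow> pvar c \<in> Zpri"
  by (simp add: Zpri_def pvar_def)

lemma burnside_eval_mult:
  assumes "p \<in> Zpri" "q \<in> Zpri"
  shows "burnside_eval (p * q) \<sim>\<^sub>B bmult (burnside_eval p) (burnside_eval q)"
proof -
  have monomial: "burnside_eval (frag_of m * q) \<sim>\<^sub>B bmult (burnside_eval (frag_of m)) (burnside_eval q)"
    if "set_mset m \<subseteq> Qpri" for m
    using assms(2) unfolding Zpri_iff_keys
  proof (induction q rule: frag_induction)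
    case (one m')
    have "frag_of (qprod (monomial_quandle m) (monomial_quandle m')) \<sim>\<^sub>B frag_of (monomial_quandle (m + m'))"
      using one that
      by (intro bcong_qiso fin_quandle_qprod fin_quandle_monomial_quandle qiso_monomial_quandle_add) auto
    then show ?case by (simp add: mult_single bcong_sym)
  next
    case (diff a b)
    then show ?case by (simp add: right_diff_distrib burnside_eval_diff bmult_diff_right bcong_diff)
  qed (simp add: burnside_eval_def bmult_frag_extend)
  show ?thesis
    using assms(1) unfolding Zpri_iff_keys
  proof (induction p rule: frag_induction)
    case (one m)
    then show ?case by (intro monomial) simp
  next
    case (diff a b)
    then show ?case by (simp add: left_diff_distrib burnside_eval_diff bmult_diff_left bcong_diff)
  qed (simp add: burnside_eval_def bmult_frag_extend)
qed

lemma burnside_eval_pvar: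
  assumes "prime_quandle P"
  shows "burnside_eval (pvar (qclass P)) \<sim>\<^sub>B frag_of P"
proof -
  have "qiso (qprod (prime_rep (qclass P)) qsingleton) P"
    using qprod_qsingleton_right qiso_prime_rep[OF assms] by (rule qiso_trans)
  moreover have "fin_quandle (qprod (prime_rep (qclass P)) qsingleton)" "fin_quandle P"
    using assms by (simp_all add: fin_quandle_qprod fin_quandle_qsingleton fin_quandle_prime_rep
        qclass_in_Qpri prime_quandle_def[of P])
  ultimately show ?thesis
    by (simp add: pvar_def monomial_quandle_single bcong_qiso)
qed

section \<open>Surjectivity\<close>

definition burnside_image :: "(qstr \<Rightarrow>\<^sub>0 int) set" where
  "burnside_image = {x. \<exists>p\<in>Zpri. burnside_eval p \<sim>\<^sub>B x}"

lemma bnull_subset_burnside_image: "bnull \<subseteq> burnside_image"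
proof
  fix x assume "x \<in> bnull"
  then have "burnside_eval 0 \<sim>\<^sub>B x"
    unfolding bcong_def burnside_eval_def using bnull_uminus by fastforce
  then show "x \<in> burnside_image" unfolding burnside_image_def using Zpri_zero by blast
qed

lemma burnside_image_diff:
  assumes "x \<in> burnside_image" "y \<in> burnside_image"
  shows "x - y \<in> burnside_image"
proof -
  obtain p q where "p \<in> Zpri" "q \<in> Zpri" "burnside_eval p \<sim>\<^sub>B x" "burnside_eval q \<sim>\<^sub>B y"
    using assms unfolding burnside_image_def by blast
  then have "burnside_eval (p - q) \<sim>\<^sub>B x - y" by (simp add: burnside_eval_diff bcong_diff)
  with \<open>p \<in> Zpri\<close> \<open>q \<in> Zpri\<close> show ?thesis
    unfolding burnside_image_def using Zpri_diff by blast
qed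

lemma burnside_image_add:
  assumes "x \<in> burnside_image" "y \<in> burnside_image"
  shows "x + y \<in> burnside_image"
proof -
  have "0 - y \<in> burnside_image"
    using bnull_zero bnull_subset_burnside_image assms(2) by (blast intro: burnside_image_diff)
  then show ?thesis using burnside_image_diff[OF assms(1)] by fastforce
qed

lemma burnside_image_bcong: "x \<in> burnside_image \<Longrightarrow> x \<sim>\<^sub>B y \<Longrightarrow> y \<in> burnside_image"
  unfolding burnside_image_def using bcong_trans by blast

lemma frag_of_qsingleton_mem_burnside_image: "frag_of qsingleton \<in> burnside_image"
  unfolding burnside_image_def using Zpri_one burnside_eval_one by force

lemma frag_of_qprod_mem_burnside_image:
  assumes "frag_of Q1 \<in> burnside_image" "frag_of Q2 \<in> burnside_image"
  shows "frag_of (qprod Q1 Q2) \<in> burnside_image"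
proof -
  obtain p1 p2 where p: "p1 \<in> Zpri" "p2 \<in> Zpri"
    "burnside_eval p1 \<sim>\<^sub>B frag_of Q1" "burnside_eval p2 \<sim>\<^sub>B frag_of Q2"
    using assms unfolding burnside_image_def by blast
  have "burnside_eval (p1 * p2) \<sim>\<^sub>B bmult (burnside_eval p1) (burnside_eval p2)"
    using p by (intro burnside_eval_mult)
  also have "\<dots> \<sim>\<^sub>B bmult (frag_of Q1) (frag_of Q2)"
    using p by (intro bmult_bcong)
  also have "\<dots> = frag_of (qprod Q1 Q2)"
    by simp
  finally show ?thesis
    unfolding burnside_image_def using p Zpri_mult by blast
qed

lemma qiso_qsingleton:
  assumes "is_quandle A op" "A = {a}"
  shows "qiso qsingleton (A, op)"
proof -
  have "op a a = a" using assms unfolding is_quandle_def by blast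
  then show ?thesis
    using assms(2) by (intro qisoI[of "\<lambda>_. a"]) (auto simp: qsingleton_def bij_betw_def)
qed

lemma card_qprod: "card (fst (qprod Q Q')) = card (fst Q) * card (fst Q')"
  by (simp add: qprod_fst card_image inj_on_subset[OF inj_prod_encode subset_UNIV] card_cartesian_product)

lemma connected_nonprime_factors:
  assumes fin: "fin_quandle Q" and "connected_rack (fst Q) (snd Q)" "\<not> is_singleton (fst Q)"
    and "\<not> prime_quandle Q"
  obtains Q1 Q2 where "fin_quandle Q1" "fin_quandle Q2" "qiso Q (qprod Q1 Q2)"
    "card (fst Q1) < card (fst Q)" "card (fst Q2) < card (fst Q)"
proof -
  obtain Q1 Q2 where Q12: "is_quandle (fst Q1) (snd Q1)" "is_quandle (fst Q2) (snd Q2)"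
      "qiso Q (qprod Q1 Q2)" "\<not> is_singleton (fst Q1)" "\<not> is_singleton (fst Q2)"
    using assms unfolding prime_quandle_def by blast
  then obtain f where f: "bij_betw f (fst Q) (fst (qprod Q1 Q2))" unfolding qiso_def by blast
  have "fst Q \<noteq> {}" using assms(2) by (simp add: connected_rack_def)
  then have ne: "fst Q1 \<noteq> {}" "fst Q2 \<noteq> {}" using f by (auto simp: bij_betw_def qprod_fst)
  have "finite (fst (qprod Q1 Q2))" using f fin bij_betw_finite by (auto simp: fin_quandle_def)
  then have fin12: "fin_quandle Q1" "fin_quandle Q2"
    using Q12 fin_quandle_qprod_iff[OF ne] is_quandle_qprod_iff[OF ne] by (auto simp: fin_quandle_def)
  have two_le_card: "2 \<le> card B" if "finite B" "B \<noteq> {}" "\<not> is_singleton B" for B :: "nat set"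
  proof -
    have "card B \<noteq> 0" "card B \<noteq> 1" using that by (simp_all add: is_singleton_altdef)
    then show ?thesis by linarith
  qed
  have "card (fst Q1) \<ge> 2" "card (fst Q2) \<ge> 2"
    using fin12 ne Q12(4,5) by (auto simp: fin_quandle_def intro: two_le_card)
  moreover have "card (fst Q) = card (fst Q1) * card (fst Q2)"
    using bij_betw_same_card[OF f] by (simp add: card_qprod)
  ultimately have "card (fst Q1) < card (fst Q)" "card (fst Q2) < card (fst Q)" by simp_all
  with fin12 Q12(3) show ?thesis by (rule that)
qed

lemma frag_of_mem_burnside_image: "fin_quandle Q \<Longrightarrow> frag_of Q \<in> burnside_image"
proof (induction "card (fst Q)" arbitrary: Q rule: less_induct)
  case less
  obtain A op where Q: "Q = (A, op)" by fastforce
  consider "A = {}" | "A \<noteq> {}" "\<not> connected_rack A op" | "is_singleton A" | "prime_quandle Q"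
    | "connected_rack A op" "\<not> is_singleton A" "\<not> prime_quandle Q"
    by blast
  then show ?case
  proof cases
    case 1
    then show ?thesis using Q frag_of_empty_bnull bnull_subset_burnside_image by auto
  next
    case 2
    have q: "is_quandle A op" "finite A" using less.prems Q by (simp_all add: fin_quandle_def)
    obtain S where S: "subrack A op S" "subrack A op (A - S)" "S \<noteq> {}" "S \<subset> A"
      using disconnected_decomp[OF q(1) 2] .
    have "card S < card A" "card (A - S) < card A"
      using S q(2) by (auto intro!: psubset_card_mono)
    then have "frag_of (S, op) \<in> burnside_image" "frag_of (A - S, op) \<in> burnside_image"
      using S less.hyps less.prems fin_quandle_subrack by (auto simp: Q)
    moreover have "frag_of (S, op) + frag_of (A - S, op) \<sim>\<^sub>B frag_of Q"
      using S less.prems unfolding Q by (intro bcong_sym[OF bcong_decomp]) auto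
    ultimately show ?thesis by (blast intro: burnside_image_add burnside_image_bcong)
  next
    case 3
    then obtain a where "A = {a}" by (auto simp: is_singleton_def)
    then have "frag_of qsingleton \<sim>\<^sub>B frag_of Q"
      using less.prems fin_quandle_qsingleton unfolding Q
      by (intro bcong_qiso qiso_qsingleton) (simp_all add: fin_quandle_def)
    with frag_of_qsingleton_mem_burnside_image show ?thesis by (rule burnside_image_bcong)
  next
    case 4
    then show ?thesis
      unfolding burnside_image_def using burnside_eval_pvar Zpri_pvar qclass_in_Qpri by blast
  next
    case 5
    have "connected_rack (fst Q) (snd Q)" "\<not> is_singleton (fst Q)" using 5 Q by simp_all
    then obtain Q1 Q2 where Q12: "fin_quandle Q1" "fin_quandle Q2" "qiso Q (qprod Q1 Q2)"
      and "card (fst Q1) < card (fst Q)" "card (fst Q2) < card (fst Q)"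
      using connected_nonprime_factors[OF less.prems _ _ 5(3)] by blast
    then have "frag_of (qprod Q1 Q2) \<in> burnside_image"
      by (intro frag_of_qprod_mem_burnside_image less.hyps)
    moreover have "frag_of (qprod Q1 Q2) \<sim>\<^sub>B frag_of Q"
      using Q12 less.prems by (intro bcong_sym[OF bcong_qiso] fin_quandle_qprod)
    ultimately show ?thesis by (rule burnside_image_bcong)
  qed
qed

lemma mem_burnside_image: "x \<in> burnside_image"
  using subset_UNIV
proof (induction x rule: frag_induction)
  case zero
  then show ?case using bnull_zero bnull_subset_burnside_image by blast
next
  case (one Q)
  then show ?case
    using frag_of_mem_burnside_image bnull_junk bnull_subset_burnside_image by blast
next
  case (diff x y)
  then show ?case by (rule burnside_image_diff)
qed

theorem theorem7p9:
  "\<exists>\<phi> :: (qstr set multiset \<Rightarrow>\<^sub>0 int) \<Rightarrow> (qstr \<Rightarrow>\<^sub>0 int).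
     (\<forall>p\<in>Zpri. \<forall>q\<in>Zpri. \<phi> (p + q) - (\<phi> p + \<phi> q) \<in> bnull) \<and>
     (\<forall>p\<in>Zpri. \<forall>q\<in>Zpri. \<phi> (p * q) - bmult (\<phi> p) (\<phi> q) \<in> bnull) \<and>
     \<phi> 1 - bsym qsingleton \<in> bnull \<and>
     (\<forall>P. prime_quandle P \<longrightarrow> \<phi> (pvar (qclass P)) - bsym P \<in> bnull) \<and>
     (\<forall>x. \<exists>p\<in>Zpri. \<phi> p - x \<in> bnull)"
proof (intro exI[of _ burnside_eval] conjI allI ballI impI)
  fix p q assume "p \<in> Zpri" "q \<in> Zpri"
  show "burnside_eval (p + q) - (burnside_eval p + burnside_eval q) \<in> bnull"
    by (simp add: burnside_eval_add bnull_zero)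
  show "burnside_eval (p * q) - bmult (burnside_eval p) (burnside_eval q) \<in> bnull"
    using burnside_eval_mult[OF \<open>p \<in> Zpri\<close> \<open>q \<in> Zpri\<close>] by (simp add: bcong_def)
next
  show "burnside_eval 1 - bsym qsingleton \<in> bnull"
    by (simp add: burnside_eval_one bsym_def bnull_zero)
next
  fix P assume "prime_quandle P"
  then show "burnside_eval (pvar (qclass P)) - bsym P \<in> bnull"
    using burnside_eval_pvar by (simp add: bsym_def bcong_def)
next
  fix x
  show "\<exists>p\<in>Zpri. burnside_eval p - x \<in> bnull"
    using mem_burnside_image by (simp add: burnside_image_def bcong_def)
qed

end
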